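(* Let $R$ be a commutative ring with $1$ and let $\alpha_0=1,\alpha_1,\alpha_2,\dots$ be a sequence in $R$. Define the infinite matrix $M=M(\alpha)$ with entries $M_{i,j}$, $i,j\in\mathbb N$, by $M_{0,0}=1$, $M_{0,j}=1$, $M_{i,0}=\alpha_i$, and $M_{i,j}=M_{i-1,j}+M_{i,j-1}$ for $i,j\geq1$. Define the unipotent lower-triangular infinite matrix $L=L(\alpha)$ by $L_{i,j}=M_{i-j,j}$ for $i\geq j\geq0$ and $L_{i,j}=0$ for $j>i$. Let $U$ be the infinite upper-triangular matrix with entries $U_{i,j}=\binom{j}{i}$. Then $M(\alpha)=L(\alpha)U$. *)

theory Defs
  imports Main
begin

fun Mmat :: "(nat \<Rightarrow> 'a::comm_ring_1) \<Rightarrow> nat \<Rightarrow> nat \<Rightarrow> 'a" where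
  "Mmat \<alpha> 0 j = 1"
| "Mmat \<alpha> (Suc i) 0 = \<alpha> (Suc i)"
| "Mmat \<alpha> (Suc i) (Suc j) = Mmat \<alpha> i (Suc j) + Mmat \<alpha> (Suc i) j"

definition Lmat :: "(nat \<Rightarrow> 'a::comm_ring_1) \<Rightarrow> nat \<Rightarrow> nat \<Rightarrow> 'a" where
  "Lmat \<alpha> i j = (if j \<le> i then Mmat \<alpha> (i - j) j else 0)"

definition Umat :: "nat \<Rightarrow> nat \<Rightarrow> 'a::comm_ring_1" where
  "Umat i j = of_nat (j choose i)"

text \<open>Product of infinite matrices: the entry (i,j) is the sum of the (finitely many,
  in the situation of interest) nonzero terms A i k * B k j.\<close>
definition inf_mat_mult :: "(nat \<Rightarrow> nat \<Rightarrow> 'a::comm_ring_1) \<Rightarrow> (nat \<Rightarrow> nat \<Rightarrow> 'a) \<Rightarrow> nat \<Rightarrow> nat \<Rightarrow> 'a" where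
  "inf_mat_mult A B i j = (\<Sum>k \<in> {k. A i k * B k j \<noteq> 0}. A i k * B k j)"

end

theory Submission
  imports Defs
begin

text \<open>The (i,j) entry of L U is the finite sum
  \<open>\<Sum>k\<le>i. M(i-k,k) * (j choose k)\<close>. Together with its companion, in which every column
  index of M is shifted by one, it satisfies the defining recursion of M: the shift in the
  row direction comes from the recursion of M itself, the shift in the column direction from
  Pascal's rule for the binomial coefficients. Induction along the recursion of M then
  identifies the two matrices.\<close>

definition lu_entry :: "(nat \<Rightarrow> 'a::comm_ring_1) \<Rightarrow> nat \<Rightarrow> nat \<Rightarrow> 'a" where
  "lu_entry \<alpha> i j = (\<Sum>k\<le>i. Mmat \<alpha> (i - k) k * of_nat (j choose k))"

definition lu_entry_shift :: "(nat \<Rightarrow> 'a::comm_ring_1) \<Rightarrow> nat \<Rightarrow> nat \<Rightarrow> 'a" where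
  "lu_entry_shift \<alpha> i j = (\<Sum>k\<le>i. Mmat \<alpha> (i - k) (Suc k) * of_nat (j choose k))"

lemma inf_mat_mult_eq_sum_atMost:
  assumes "\<And>k. n < k \<Longrightarrow> A i k = 0"
  shows "inf_mat_mult A B i j = (\<Sum>k\<le>n. A i k * B k j)"
  unfolding inf_mat_mult_def
proof (rule sum.mono_neutral_left)
  show "{k. A i k * B k j \<noteq> 0} \<subseteq> {..n}"
  proof
    fix k
    assume "k \<in> {k. A i k * B k j \<noteq> 0}"
    then have "A i k \<noteq> 0" by auto
    then show "k \<in> {..n}" using assms by (meson atMost_iff not_le)
  qed
qed auto

lemma lu_entry_shift_Suc:
  "lu_entry_shift \<alpha> (Suc i) j = lu_entry \<alpha> (Suc i) j + lu_entry_shift \<alpha> i j"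
proof -
  have "(\<Sum>k\<le>i. Mmat \<alpha> (Suc i - k) (Suc k) * of_nat (j choose k))
      = (\<Sum>k\<le>i. Mmat \<alpha> (i - k) (Suc k) * of_nat (j choose k))
        + (\<Sum>k\<le>i. Mmat \<alpha> (Suc i - k) k * of_nat (j choose k))"
    by (simp add: sum.distrib[symmetric] Suc_diff_le algebra_simps)
  then show ?thesis
    unfolding lu_entry_shift_def lu_entry_def by (simp add: algebra_simps)
qed

lemma lu_entry_Suc_Suc:
  "lu_entry \<alpha> (Suc i) (Suc j) = lu_entry \<alpha> (Suc i) j + lu_entry_shift \<alpha> i j"
proof -
  have split_first: "lu_entry \<alpha> (Suc i) j' =
      \<alpha> (Suc i) + (\<Sum>k\<le>i. Mmat \<alpha> (i - k) (Suc k) * of_nat (j' choose Suc k))" for j'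
    unfolding lu_entry_def by (simp add: sum.atMost_Suc_shift del: sum.atMost_Suc)
  have "(\<Sum>k\<le>i. Mmat \<alpha> (i - k) (Suc k) * of_nat (Suc j choose Suc k))
      = (\<Sum>k\<le>i. Mmat \<alpha> (i - k) (Suc k) * of_nat (j choose Suc k)) + lu_entry_shift \<alpha> i j"
    unfolding lu_entry_shift_def by (simp add: sum.distrib[symmetric] algebra_simps)
  then show ?thesis
    by (simp add: split_first algebra_simps)
qed

lemma lu_entry_Suc_col: "lu_entry \<alpha> i (Suc j) = lu_entry_shift \<alpha> i j"
proof (cases i)
  case 0
  then show ?thesis by (simp add: lu_entry_def lu_entry_shift_def)
next
  case (Suc i')
  then show ?thesis by (simp add: lu_entry_Suc_Suc lu_entry_shift_Suc add.commute)
qed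

lemma Mmat_eq_lu_entry: "Mmat \<alpha> i j = lu_entry \<alpha> i j"
proof (induction \<alpha> i j rule: Mmat.induct)
  case (1 \<alpha> j)
  then show ?case by (simp add: lu_entry_def)
next
  case (2 \<alpha> i)
  then show ?case by (simp add: lu_entry_def sum.atMost_Suc_shift del: sum.atMost_Suc)
next
  case (3 \<alpha> i j)
  then show ?case by (simp add: lu_entry_Suc_col lu_entry_Suc_Suc lu_entry_shift_Suc)
qed

theorem proposition4p6:
  fixes \<alpha> :: "nat \<Rightarrow> 'a::comm_ring_1"
  assumes "\<alpha> 0 = 1"
  shows "Mmat \<alpha> = inf_mat_mult (Lmat \<alpha>) Umat"
proof (intro ext)
  fix i j
  have "inf_mat_mult (Lmat \<alpha>) Umat i j = (\<Sum>k\<le>i. Lmat \<alpha> i k * Umat k j)"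
    by (rule inf_mat_mult_eq_sum_atMost) (simp add: Lmat_def)
  also have "\<dots> = lu_entry \<alpha> i j"
    by (simp add: lu_entry_def Lmat_def Umat_def)
  finally show "Mmat \<alpha> i j = inf_mat_mult (Lmat \<alpha>) Umat i j"
    by (simp add: Mmat_eq_lu_entry)
qed

end
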